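(* Let $G=(V,E)$ be a graph with $n$ vertices, $m$ edges and maximum degree $\Delta$. The deterministic variant of Procedure Edge-Coloring with parameter $h\le\log\Delta$ computes a proper $(\Delta+3\cdot2^h)$-edge-coloring of $G$ in $O\left(\frac{m\Delta\log n}{2^h}\right)$ time.
   Context: Logarithms are base 2. A proper $k$-edge-coloring is a map $\varphi:E\to\{1,\dots,k\}$ with distinct colors on distinct edges sharing an endpoint. A degree-splitting of $H$ with discrepancy $\kappa$ is a partition $(E_1,E_2)$ of $E(H)$ with $|\deg_{E_1}(v)-\deg_{E_2}(v)|\le\kappa$ for all $v$. Procedure Edge-Coloring$(H,h)$: if $h=0$, return a proper $(\Delta(H)+1)$-edge-coloring of $H$ with palette $\{1,\dots,\Delta(H)+1\}$ computed by a base-case subroutine. Otherwise compute in $O(|E(H)|)$ time a degree-splitting $(E_1,E_2)$ of $H$ with discrepancy at most 2 and $\{|E_1|,|E_2|\}=\{\lfloor |E(H)|/2\rfloor,\lceil |E(H)|/2\rceil\}$; let $H_1=(V(H),E_1)$, $H_2=(V(H),E_2)$ with isolated vertices discarded; compute $\varphi_1=$ Edge-Coloring$(H_1,h-1)$, $\varphi_2=$ Edge-Coloring$(H_2,h-1)$; return $\varphi=\varphi_1$ on $E_1$ and $\varphi=p_1+\varphi_2$ on $E_2$, where $p_1$ is the palette size of $\varphi_1$. Deterministic variant: the base-case subroutine is a deterministic algorithm computing a proper $(\Delta'+1)$-edge-coloring of a graph with $n'$ vertices, $m'$ edges and maximum degree $\Delta'$ in $O(m'\Delta'\log n')$ time.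 *)

theory Defs
  imports Complex_Main
begin

text \<open>Graphs are represented by edge sets: an edge is a 2-element vertex set.
  A subgraph with isolated vertices discarded is represented by its edge set F,
  whose vertex set is the union of F.\<close>

definition edge_set :: "'a set set \<Rightarrow> bool" where
  "edge_set F \<longleftrightarrow> finite F \<and> (\<forall>e\<in>F. card e = 2)"

definition simple_graph :: "'a set \<Rightarrow> 'a set set \<Rightarrow> bool" where
  "simple_graph V E \<longleftrightarrow> finite V \<and> E \<subseteq> {e. e \<subseteq> V \<and> card e = 2}"

definition deg :: "'a set set \<Rightarrow> 'a \<Rightarrow> nat" where
  "deg F v = card {e \<in> F. v \<in> e}"

definition max_deg :: "'a set set \<Rightarrow> nat" where
  "max_deg F = Max (insert 0 (deg F ` (\<Union>F)))"

definition proper_edge_coloring :: "'a set set \<Rightarrow> ('a set \<Rightarrow> nat) \<Rightarrow> nat \<Rightarrow> bool" where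
  "proper_edge_coloring F \<phi> k \<longleftrightarrow>
     (\<forall>e\<in>F. \<phi> e \<in> {1..k}) \<and>
     (\<forall>e\<in>F. \<forall>e'\<in>F. e \<noteq> e' \<and> e \<inter> e' \<noteq> {} \<longrightarrow> \<phi> e \<noteq> \<phi> e')"

definition splitter_ok :: "('a set set \<Rightarrow> 'a set set) \<Rightarrow> bool" where
  "splitter_ok sp \<longleftrightarrow> (\<forall>F. edge_set F \<longrightarrow>
      sp F \<subseteq> F \<and>
      card (sp F) \<in> {card F div 2, (card F + 1) div 2} \<and>
      (\<forall>v. \<bar>int (deg (sp F) v) - int (deg (F - sp F) v)\<bar> \<le> 2))"

definition base_ok :: "('a set set \<Rightarrow> 'a set \<Rightarrow> nat) \<Rightarrow> bool" where
  "base_ok b \<longleftrightarrow> (\<forall>F. edge_set F \<longrightarrow> proper_edge_coloring F (b F) (max_deg F + 1))"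

fun edge_coloring ::
  "('a set set \<Rightarrow> 'a set set) \<Rightarrow> ('a set set \<Rightarrow> 'a set \<Rightarrow> nat) \<Rightarrow> nat \<Rightarrow> 'a set set
     \<Rightarrow> ('a set \<Rightarrow> nat) \<times> nat" where
  "edge_coloring sp b 0 F = (b F, max_deg F + 1)"
| "edge_coloring sp b (Suc h) F =
     (let E1 = sp F; E2 = F - E1;
          (\<phi>1, p1) = edge_coloring sp b h E1;
          (\<phi>2, p2) = edge_coloring sp b h E2
      in (\<lambda>e. if e \<in> E1 then \<phi>1 e else p1 + \<phi>2 e, p1 + p2))"

text \<open>Running time of the procedure, given the cost tsp F of the splitting step
  (including recombination) on F and the cost tb F of the base case on F.\<close>
fun edge_coloring_time ::
  "('a set set \<Rightarrow> 'a set set) \<Rightarrow> ('a set set \<Rightarrow> real) \<Rightarrow> ('a set set \<Rightarrow> real) \<Rightarrow> nat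
     \<Rightarrow> 'a set set \<Rightarrow> real" where
  "edge_coloring_time sp tsp tb 0 F = tb F"
| "edge_coloring_time sp tsp tb (Suc h) F =
     tsp F + edge_coloring_time sp tsp tb h (sp F) + edge_coloring_time sp tsp tb h (F - sp F)"

end

theory Submission
  imports Defs
begin

text \<open>A splitting of discrepancy 2 turns maximum degree \<open>\<Delta>\<close> into at most \<open>(\<Delta> + 2) / 2\<close> on
  both halves. Hence, by induction on \<open>h\<close>, the palette \<open>p\<close> returned at depth \<open>h\<close> satisfies
  \<open>p + 2 \<le> \<Delta> + 3 \<cdot> 2^h\<close>, since the base case uses \<open>\<Delta> + 1\<close> colours and the two halves get
  disjoint palettes. For the running time, every level of the recursion costs \<open>c m\<close> for
  splitting, and the base cases cost \<open>c m \<Delta>' log n\<close> in total, where the leaves have maximum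
  degree \<open>\<Delta>' \<le> (\<Delta> - 2) / 2^h + 2 \<le> 3\<Delta> / 2^h\<close>. Finally \<open>2^h \<le> \<Delta> \<le> n\<close> gives
  \<open>h \<le> log n \<le> (\<Delta> / 2^h) log n\<close>, so the splitting cost is absorbed.\<close>

lemma edge_set_subset: "edge_set F \<Longrightarrow> A \<subseteq> F \<Longrightarrow> edge_set A"
  unfolding edge_set_def by (auto intro: finite_subset)

lemma finite_Union_edge_set: "edge_set F \<Longrightarrow> finite (\<Union>F)"
  unfolding edge_set_def by (metis card.infinite finite_Union zero_neq_numeral)

lemma deg_eq_0: "v \<notin> \<Union>F \<Longrightarrow> deg F v = 0"
proof -
  assume "v \<notin> \<Union>F"
  then have "{e \<in> F. v \<in> e} = {}" by blast
  then show ?thesis unfolding deg_def by (metis card.empty)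
qed

lemma simple_graph_edge_set:
  assumes "simple_graph V E"
  shows "edge_set E"
proof -
  have "E \<subseteq> Pow V" "finite V" using assms by (auto simp: simple_graph_def)
  then show ?thesis using assms by (auto simp: edge_set_def simple_graph_def intro: finite_subset)
qed

lemma deg_le_max_deg: "finite (\<Union>F) \<Longrightarrow> deg F v \<le> max_deg F"
proof (cases "v \<in> \<Union>F")
  case False
  then show ?thesis by (simp add: deg_eq_0)
qed (auto simp: max_deg_def)

lemma max_deg_attained:
  assumes "finite (\<Union>F)"
  obtains v where "deg F v = max_deg F"
proof (cases "\<Union>F = {}")
  case True
  then have "max_deg F = 0" "deg F v = 0" for v
    by (simp_all add: max_deg_def True deg_eq_0 del: Union_empty_conv)
  then show ?thesis using that by simp
next
  case False
  then obtain u where "u \<in> \<Union>F" by blast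
  have "max_deg F \<in> insert 0 (deg F ` \<Union>F)"
    unfolding max_deg_def using assms by (intro Max_in) auto
  moreover have "max_deg F = 0 \<Longrightarrow> deg F u = 0"
    using deg_le_max_deg[OF assms, of u] by simp
  ultimately show ?thesis using that by (metis imageE insertE)
qed

lemma deg_Diff_add:
  assumes "finite F" "A \<subseteq> F"
  shows "deg F v = deg A v + deg (F - A) v"
proof -
  have "{e \<in> F. v \<in> e} = {e \<in> A. v \<in> e} \<union> {e \<in> F - A. v \<in> e}" using assms(2) by auto
  moreover have "finite {e \<in> A. v \<in> e}" "finite {e \<in> F - A. v \<in> e}"
    using assms by (auto intro: finite_subset[of _ F])
  ultimately show ?thesis unfolding deg_def by (simp add: card_Un_disjoint disjoint_iff)
qed

lemma max_deg_split_le: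
  assumes "finite F" "finite (\<Union>F)" "A \<subseteq> F"
    and "\<And>v. \<bar>int (deg A v) - int (deg (F - A) v)\<bar> \<le> \<kappa>"
  shows "2 * int (max_deg A) \<le> int (max_deg F) + \<kappa>"
proof -
  have "finite (\<Union>A)" using assms(2,3) by (meson Union_mono finite_subset)
  then obtain v where "deg A v = max_deg A" by (rule max_deg_attained)
  moreover have "deg F v = deg A v + deg (F - A) v" using assms(1,3) by (rule deg_Diff_add)
  moreover have "deg F v \<le> max_deg F" using assms(2) by (rule deg_le_max_deg)
  ultimately show ?thesis using assms(4)[of v] by linarith
qed

lemma splitter_ok_max_deg:
  assumes "splitter_ok sp" "edge_set F"
  shows "2 * max_deg (sp F) \<le> max_deg F + 2" "2 * max_deg (F - sp F) \<le> max_deg F + 2"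
proof -
  have sub: "sp F \<subseteq> F" and disc: "\<And>v. \<bar>int (deg (sp F) v) - int (deg (F - sp F) v)\<bar> \<le> 2"
    using assms unfolding splitter_ok_def by auto
  have fin: "finite F" "finite (\<Union>F)"
    using assms(2) finite_Union_edge_set by (auto simp: edge_set_def)
  show "2 * max_deg (sp F) \<le> max_deg F + 2"
    using max_deg_split_le[OF fin sub disc] by linarith
  have "F - (F - sp F) = sp F" using sub by blast
  then have "\<bar>int (deg (F - sp F) v) - int (deg (F - (F - sp F)) v)\<bar> \<le> 2" for v
    using disc[of v] by simp
  from max_deg_split_le[OF fin Diff_subset this]
  show "2 * max_deg (F - sp F) \<le> max_deg F + 2" by linarith
qed

lemma max_deg_le_card:
  assumes "simple_graph V E"
  shows "max_deg E \<le> card V"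
proof -
  have fV: "finite V" and E: "\<And>e. e \<in> E \<Longrightarrow> e \<subseteq> V \<and> card e = 2"
    using assms by (auto simp: simple_graph_def)
  have "finite (\<Union>E)" using E fV by (meson Sup_least finite_subset)
  then obtain v where v: "deg E v = max_deg E" by (rule max_deg_attained)
  have "{e \<in> E. v \<in> e} \<subseteq> (\<lambda>u. {v, u}) ` V"
  proof
    fix e assume "e \<in> {e \<in> E. v \<in> e}"
    then have "e \<in> E" "v \<in> e" by auto
    with E obtain x y where "e = {x, y}" "e \<subseteq> V" by (meson card_2_iff)
    with \<open>v \<in> e\<close> show "e \<in> (\<lambda>u. {v, u}) ` V" by (auto simp: insert_commute)
  qed
  then have "deg E v \<le> card ((\<lambda>u. {v, u}) ` V)"
    unfolding deg_def using fV by (intro card_mono) auto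
  also have "\<dots> \<le> card V" using fV by (rule card_image_le)
  finally show ?thesis using v by simp
qed

lemma proper_edge_coloring_mono:
  "proper_edge_coloring F \<phi> k \<Longrightarrow> k \<le> k' \<Longrightarrow> proper_edge_coloring F \<phi> k'"
  unfolding proper_edge_coloring_def by fastforce

lemma proper_edge_coloring_shifted_Un:
  assumes \<phi>\<^sub>1: "proper_edge_coloring A \<phi>\<^sub>1 p\<^sub>1" and \<phi>\<^sub>2: "proper_edge_coloring B \<phi>\<^sub>2 p\<^sub>2"
    and "A \<inter> B = {}"
  defines "\<phi> \<equiv> \<lambda>e. if e \<in> A then \<phi>\<^sub>1 e else p\<^sub>1 + \<phi>\<^sub>2 e"
  shows "proper_edge_coloring (A \<union> B) \<phi> (p\<^sub>1 + p\<^sub>2)"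
proof -
  have ran\<^sub>1: "\<phi>\<^sub>1 e \<in> {1..p\<^sub>1}" if "e \<in> A" for e
    using \<phi>\<^sub>1 that unfolding proper_edge_coloring_def by blast
  have ran\<^sub>2: "\<phi>\<^sub>2 e \<in> {1..p\<^sub>2}" if "e \<in> B" for e
    using \<phi>\<^sub>2 that unfolding proper_edge_coloring_def by blast
  have across: "\<phi> e < \<phi> e'" if "e \<in> A" "e' \<in> B" for e e'
    using ran\<^sub>1[OF that(1)] ran\<^sub>2[OF that(2)] that \<open>A \<inter> B = {}\<close> unfolding \<phi>_def by auto
  have "\<phi> e \<noteq> \<phi> e'" if "e \<in> A \<union> B" "e' \<in> A \<union> B" "e \<noteq> e'" "e \<inter> e' \<noteq> {}" for e e'
  proof (cases "e \<in> A"; cases "e' \<in> A")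
    assume "e \<in> A" "e' \<in> A"
    then show ?thesis using \<phi>\<^sub>1 that(3,4) unfolding proper_edge_coloring_def \<phi>_def by simp
  next
    assume "e \<notin> A" "e' \<notin> A"
    then show ?thesis using \<phi>\<^sub>2 that unfolding proper_edge_coloring_def \<phi>_def by simp
  qed (use that across in \<open>fastforce dest: less_not_sym\<close>)+
  moreover have "\<phi> e \<in> {1..p\<^sub>1 + p\<^sub>2}" if "e \<in> A \<union> B" for e
    using that ran\<^sub>1 ran\<^sub>2 unfolding \<phi>_def by fastforce
  ultimately show ?thesis unfolding proper_edge_coloring_def by blast
qed

lemma edge_coloring_Suc:
  "edge_coloring sp b (Suc h) F =
     (\<lambda>e. if e \<in> sp F then fst (edge_coloring sp b h (sp F)) e
          else snd (edge_coloring sp b h (sp F)) + fst (edge_coloring sp b h (F - sp F)) e,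
      snd (edge_coloring sp b h (sp F)) + snd (edge_coloring sp b h (F - sp F)))"
  by (simp add: Let_def case_prod_beta)

lemma edge_coloring_proper:
  assumes "splitter_ok sp" "base_ok b" "edge_set F"
  shows "proper_edge_coloring F (fst (edge_coloring sp b h F)) (snd (edge_coloring sp b h F))"
  using assms(3)
proof (induction h arbitrary: F)
  case 0
  then show ?case using assms(2) by (simp add: base_ok_def)
next
  case (Suc h)
  have "sp F \<subseteq> F" using assms(1) Suc.prems by (simp add: splitter_ok_def)
  then have "edge_set (sp F)" "edge_set (F - sp F)"
    using Suc.prems by (auto intro: edge_set_subset)
  from proper_edge_coloring_shifted_Un[OF Suc.IH[OF this(1)] Suc.IH[OF this(2)] Diff_disjoint]
  have "proper_edge_coloring (sp F \<union> (F - sp F)) (fst (edge_coloring sp b (Suc h) F))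
      (snd (edge_coloring sp b (Suc h) F))"
    by (simp only: edge_coloring_Suc fst_conv snd_conv)
  moreover have "sp F \<union> (F - sp F) = F" using \<open>sp F \<subseteq> F\<close> by blast
  ultimately show ?case by simp
qed

lemma edge_coloring_palette:
  assumes "splitter_ok sp" "edge_set F"
  shows "snd (edge_coloring sp b h F) + 2 \<le> max_deg F + 3 * 2 ^ h"
  using assms(2)
proof (induction h arbitrary: F)
  case (Suc h)
  have "edge_set (sp F)" "edge_set (F - sp F)"
    using assms(1) Suc.prems by (auto simp: splitter_ok_def intro: edge_set_subset)
  with Suc.IH have "snd (edge_coloring sp b h (sp F)) + 2 \<le> max_deg (sp F) + 3 * 2 ^ h"
    "snd (edge_coloring sp b h (F - sp F)) + 2 \<le> max_deg (F - sp F) + 3 * 2 ^ h"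
    by blast+
  then show ?case
    using splitter_ok_max_deg[OF assms(1) Suc.prems] unfolding edge_coloring_Suc snd_conv by simp
qed simp
lemma edge_coloring_proper_palette:
  assumes "splitter_ok sp" "base_ok b" "edge_set F"
  shows "proper_edge_coloring F (fst (edge_coloring sp b h F)) (max_deg F + 3 * 2 ^ h)"
  using edge_coloring_palette[OF assms(1,3), of b h]
  by (intro proper_edge_coloring_mono[OF edge_coloring_proper[OF assms]]) simp

text \<open>The bound on the maximum degree after \<open>h\<close> splittings: it is \<open>\<Delta>\<close> iterated \<open>h\<close> times
  through \<open>d \<mapsto> (d + 2) / 2\<close>, whose fixed point is \<open>2\<close>.\<close>
definition halved_degree :: "nat \<Rightarrow> nat \<Rightarrow> real" where
  "halved_degree \<Delta> h = (real \<Delta> - 2) / 2 ^ h + 2"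

lemma halved_degree_0 [simp]: "halved_degree \<Delta> 0 = \<Delta>"
  by (simp add: halved_degree_def)

lemma halved_degree_le_Suc:
  assumes "2 * a \<le> \<Delta> + 2"
  shows "halved_degree a h \<le> halved_degree \<Delta> (Suc h)"
proof -
  have "real (2 * a) \<le> real (\<Delta> + 2)" using assms by (simp only: of_nat_le_iff)
  then have "real a - 2 \<le> (real \<Delta> - 2) / 2" by simp
  then have "(real a - 2) / 2 ^ h \<le> (real \<Delta> - 2) / 2 / 2 ^ h" by (rule divide_right_mono) simp
  then show ?thesis by (simp add: halved_degree_def field_simps)
qed

lemma halved_degree_le:
  assumes "2 ^ h \<le> \<Delta>"
  shows "halved_degree \<Delta> h \<le> 3 * real \<Delta> / 2 ^ h"
proof -
  have "(2::real) ^ h \<le> \<Delta>" using assms by (metis of_nat_le_iff of_nat_numeral of_nat_power)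
  then have "real \<Delta> - 2 + 2 * 2 ^ h \<le> 3 * real \<Delta>" by linarith
  then have "(real \<Delta> - 2 + 2 * 2 ^ h) / 2 ^ h \<le> 3 * real \<Delta> / 2 ^ h" by (simp add: divide_right_mono)
  then show ?thesis by (simp add: halved_degree_def add_divide_distrib)
qed

text \<open>Also for \<open>m = 0\<close>, where \<open>log 2 0 = 0\<close>.\<close>
lemma log2_mono_nat:
  fixes m N :: nat
  assumes "m \<le> N" "1 \<le> N"
  shows "log 2 m \<le> log 2 N"
proof (cases "m = 0")
  case True
  have "0 \<le> log 2 N" using \<open>1 \<le> N\<close> by simp
  with True show ?thesis by (simp add: log_def)
qed (use assms in simp)

lemma edge_coloring_time_le:
  fixes c :: real
  assumes sp: "splitter_ok sp" and "c \<ge> 0"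
    and tsp: "\<And>F. edge_set F \<Longrightarrow> tsp F \<le> c * card F"
    and tb: "\<And>F. edge_set F \<Longrightarrow> tb F \<le> c * card F * max_deg F * log 2 (card (\<Union>F))"
    and "1 \<le> N" "edge_set F" "card (\<Union>F) \<le> N"
  shows "edge_coloring_time sp tsp tb h F
    \<le> c * card F * (h + halved_degree (max_deg F) h * log 2 N)"
  using assms(6,7)
proof (induction h arbitrary: F)
  case 0
  have "log 2 (card (\<Union>F)) \<le> log 2 N" using 0(2) \<open>1 \<le> N\<close> by (rule log2_mono_nat)
  then have "c * card F * max_deg F * log 2 (card (\<Union>F)) \<le> c * card F * max_deg F * log 2 N"
    using \<open>c \<ge> 0\<close> by (simp add: mult_left_mono)
  then show ?case using tb[OF 0(1)] by simp
next
  case (Suc h)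
  define L where "L = log 2 N"
  define K where "K = halved_degree (max_deg F) (Suc h)"
  have "L \<ge> 0" using \<open>1 \<le> N\<close> by (simp add: L_def)
  have "sp F \<subseteq> F" using sp Suc.prems(1) by (simp add: splitter_ok_def)
  have part: "edge_coloring_time sp tsp tb h A \<le> c * card A * (h + K * L)"
    if "A \<subseteq> F" "2 * max_deg A \<le> max_deg F + 2" for A
  proof -
    have "edge_set A" using Suc.prems(1) \<open>A \<subseteq> F\<close> by (rule edge_set_subset)
    moreover have "card (\<Union>A) \<le> N"
      using Suc.prems \<open>A \<subseteq> F\<close> finite_Union_edge_set
      by (meson Union_mono card_mono le_trans)
    moreover have "halved_degree (max_deg A) h * L \<le> K * L"
      using halved_degree_le_Suc[OF that(2)] \<open>L \<ge> 0\<close> by (simp add: K_def mult_right_mono)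
    ultimately have "edge_coloring_time sp tsp tb h A
        \<le> c * card A * (h + halved_degree (max_deg A) h * L)"
      using Suc.IH unfolding L_def by blast
    also have "\<dots> \<le> c * card A * (h + K * L)"
      using \<open>halved_degree (max_deg A) h * L \<le> K * L\<close> \<open>c \<ge> 0\<close> by (intro mult_left_mono) auto
    finally show ?thesis .
  qed
  have "card (sp F) + card (F - sp F) = card F"
    using \<open>sp F \<subseteq> F\<close> Suc.prems(1) by (simp add: edge_set_def card_Diff_subset card_mono finite_subset)
  then have card_split: "real (card F) = card (sp F) + card (F - sp F)" by (metis of_nat_add)
  have "edge_coloring_time sp tsp tb (Suc h) F
      \<le> c * card F + c * card (sp F) * (h + K * L) + c * card (F - sp F) * (h + K * L)"
    using tsp[OF Suc.prems(1)] part[OF \<open>sp F \<subseteq> F\<close>] part[OF Diff_subset[of F "sp F"]]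
      splitter_ok_max_deg[OF sp Suc.prems(1)] by simp
  also have "\<dots> = c * card F * (Suc h + K * L)"
    using card_split by (simp add: algebra_simps)
  finally show ?case by (simp add: K_def L_def)
qed

lemma depth_plus_halved_degree_le:
  assumes "2 ^ h \<le> \<Delta>" "real h \<le> L"
  shows "h + halved_degree \<Delta> h * L \<le> 4 * real \<Delta> * L / 2 ^ h"
proof -
  have "L \<ge> 0" using assms(2) by linarith
  have "(2::real) ^ h \<le> \<Delta>" using assms(1) by (metis of_nat_le_iff of_nat_numeral of_nat_power)
  then have "1 * L \<le> \<Delta> / 2 ^ h * L" using \<open>L \<ge> 0\<close> by (intro mult_right_mono) auto
  moreover have "halved_degree \<Delta> h * L \<le> 3 * real \<Delta> / 2 ^ h * L"
    using halved_degree_le[OF assms(1)] \<open>L \<ge> 0\<close> by (rule mult_right_mono)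
  ultimately have "h + halved_degree \<Delta> h * L \<le> \<Delta> / 2 ^ h * L + 3 * real \<Delta> / 2 ^ h * L"
    using assms(2) by linarith
  also have "\<dots> = 4 * real \<Delta> * L / 2 ^ h" by (simp add: field_simps)
  finally show ?thesis .
qed

lemma edge_coloring_time_simple_graph:
  fixes c :: real
  assumes G: "simple_graph V E" and hD: "2 ^ h \<le> max_deg E"
    and sp: "splitter_ok sp" and "c \<ge> 0"
    and tsp: "\<And>F. edge_set F \<Longrightarrow> tsp F \<le> c * card F"
    and tb: "\<And>F. edge_set F \<Longrightarrow> tb F \<le> c * card F * max_deg F * log 2 (card (\<Union>F))"
  shows "edge_coloring_time sp tsp tb h E \<le> 4 * c * (card E * max_deg E * log 2 (card V) / 2 ^ h)"
proof -
  have "\<Union>E \<subseteq> V" "finite V" using G by (auto simp: simple_graph_def)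
  then have "card (\<Union>E) \<le> card V" by (rule card_mono[rotated])
  have "2 ^ h \<le> card V" using hD max_deg_le_card[OF G] by linarith
  then have "real h \<le> log 2 (card V)" by (rule le_log2_of_power)
  have "1 \<le> card V" using \<open>2 ^ h \<le> card V\<close> one_le_power[of "2::nat" h] by linarith
  have "edge_coloring_time sp tsp tb h E
      \<le> c * card E * (h + halved_degree (max_deg E) h * log 2 (card V))"
    using edge_coloring_time_le[OF sp \<open>c \<ge> 0\<close> tsp tb \<open>1 \<le> card V\<close>
        simple_graph_edge_set[OF G] \<open>card (\<Union>E) \<le> card V\<close>] .
  also have "\<dots> \<le> c * card E * (4 * real (max_deg E) * log 2 (card V) / 2 ^ h)"
    using depth_plus_halved_degree_le[OF hD \<open>real h \<le> _\<close>] \<open>c \<ge> 0\<close> by (intro mult_left_mono) auto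
  also have "\<dots> = 4 * c * (card E * max_deg E * log 2 (card V) / 2 ^ h)"
    by (simp add: mult_ac)
  finally show ?thesis .
qed

theorem corollary3p9:
  fixes c :: real
  assumes "c \<ge> 0"
  shows "\<exists>C::real. \<forall>(V::'a set) E h sp b tsp tb.
    simple_graph V E \<and> 2 ^ h \<le> max_deg E \<and>
    splitter_ok sp \<and> base_ok b \<and>
    (\<forall>F. edge_set F \<longrightarrow> tsp F \<le> c * card F) \<and>
    (\<forall>F. edge_set F \<longrightarrow> tb F \<le> c * card F * max_deg F * log 2 (card (\<Union>F)))
    \<longrightarrow>
    proper_edge_coloring E (fst (edge_coloring sp b h E)) (max_deg E + 3 * 2 ^ h) \<and>
    edge_coloring_time sp tsp tb h E \<le> C * (card E * max_deg E * log 2 (card V) / 2 ^ h)"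
  using edge_coloring_proper_palette simple_graph_edge_set
    edge_coloring_time_simple_graph[OF _ _ _ \<open>c \<ge> 0\<close>]
  by (intro exI[of _ "4 * c"] allI impI conjI; elim conjE) blast+

end
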